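(* Let $\{S_1,\dots,S_m\}$ be a system of contraction maps of $\mathbb R^n$ with $r_k=\operatorname{Lip}S_k$, $\mathbf r=(r_1,\dots,r_m)$, $\bar r=\max_k r_k$. For $t\in\mathbb R^n$ let $\mathcal S_t=\{S_1,\dots,S_{m-1},S_{m,t}\}$ with $S_{m,t}(x)=S_m(x)+t$, and let $K_t$ be its attractor. Let $1\le k<m$. If $r_k+r_m+\bar r<1$ and $s_{\mathbf r}<n/2$, then $S_k(K_t)\cap S_{m,t}(K_t)=\varnothing$ for Lebesgue almost all $t\in\mathbb R^n$.
   Context: The attractor of a system of contractions $\{T_1,\dots,T_m\}$ is the unique nonempty compact set $K$ with $K=\bigcup_k T_k(K)$. $s_{\mathbf r}$ is the unique solution $s$ of $r_1^s+\dots+r_m^s=1$. *)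

theory Defs
  imports "HOL-Analysis.Analysis"
begin

definition Lip :: "('a::metric_space \<Rightarrow> 'b::metric_space) \<Rightarrow> real" where
  "Lip f = Inf {C. C-lipschitz_on UNIV f}"

definition contraction_map :: "('a::metric_space \<Rightarrow> 'a) \<Rightarrow> bool" where
  "contraction_map f \<longleftrightarrow> (\<exists>C<1. C-lipschitz_on UNIV f)"

definition attractor :: "'i set \<Rightarrow> ('i \<Rightarrow> 'a::metric_space \<Rightarrow> 'a) \<Rightarrow> 'a set" where
  "attractor I T = (THE K. K \<noteq> {} \<and> compact K \<and> K = (\<Union>k\<in>I. T k ` K))"

definition sim_dim :: "'i set \<Rightarrow> ('i \<Rightarrow> real) \<Rightarrow> real" where
  "sim_dim I r = (THE s. (\<Sum>k\<in>I. r k powr s) = 1)"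

end

theory Submission
  imports Defs
begin

text \<open>Enlarge the contraction ratios to \<open>a j \<ge> \<eta> > 0\<close> so that still
  \<open>a k + a m + max a < 1\<close> and \<open>\<Sum>j. a j powr p \<le> 1\<close> for some \<open>p < n/2\<close>. Cutting the coding tree
  where the ratio of a word first drops below \<open>\<epsilon>\<close> gives at most \<open>(\<epsilon> \<eta>) powr -p\<close> words
  (Kraft's inequality) whose images cover the attractor. If \<open>S k (K t)\<close> meets \<open>S m (K t) + t\<close>,
  then \<open>t\<close> lies in the coincidence set of a pair of such words \<open>w, w'\<close>. On that set the defect
  \<open>S k (w\<^sub>t 0) - (S m (w'\<^sub>t 0) + t)\<close> is \<open>O(\<epsilon>)\<close>; as \<open>t\<close> enters it with coefficient one while the
  rest is \<open>(a k + a m)/(1 - max a)\<close>-Lipschitz in \<open>t\<close>, the coincidence set has diameter \<open>O(\<epsilon>)\<close>.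
  The bad translations in a ball are thus covered by \<open>O(\<epsilon> powr -2p)\<close> sets of diameter \<open>O(\<epsilon>)\<close>,
  of total measure \<open>O(\<epsilon> powr (n - 2p))\<close>.\<close>

subsection \<open>Lipschitz constants and attractors\<close>

lemma contraction_map_Lip:
  fixes f :: "'a::metric_space \<Rightarrow> 'a"
  assumes "contraction_map f"
  shows "Lip f < 1" "(Lip f)-lipschitz_on UNIV f"
proof -
  obtain C where C: "C < 1" "C-lipschitz_on UNIV f"
    using assms unfolding contraction_map_def by blast
  define X where "X = {C. C-lipschitz_on UNIV f}"
  have X: "X \<noteq> {}" "bdd_below X" "Lip f = Inf X"
    using C unfolding X_def Lip_def bdd_below_def lipschitz_on_def by auto
  show "Lip f < 1"
    using cInf_lower[OF _ X(2), of C] C X(3) by (auto simp: X_def)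
  have "0 \<le> Lip f"
    unfolding X(3) by (rule cInf_greatest[OF X(1)]) (auto simp: X_def lipschitz_on_def)
  moreover have "dist (f x) (f y) \<le> Lip f * dist x y" for x y
  proof (cases "x = y")
    case False
    then have "dist (f x) (f y) / dist x y \<le> Inf X"
      by (intro cInf_greatest[OF X(1)]) (auto simp: X_def lipschitz_on_def divide_le_eq)
    then show ?thesis using False unfolding X(3) by (simp add: divide_le_eq mult.commute)
  qed simp
  ultimately show "(Lip f)-lipschitz_on UNIV f"
    by (auto simp: lipschitz_on_def)
qed

lemma self_similar_compact_subset:
  fixes T :: "'i \<Rightarrow> 'a::real_normed_vector \<Rightarrow> 'a"
  assumes c: "0 \<le> c" "c < 1" and lip: "\<And>i. i \<in> I \<Longrightarrow> c-lipschitz_on UNIV (T i)"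
    and K: "compact K" "K = (\<Union>i\<in>I. T i ` K)"
    and L: "compact L" "L \<noteq> {}" "L = (\<Union>i\<in>I. T i ` L)"
  shows "K \<subseteq> L"
proof
  have "bounded (K \<union> L)" using K L by (simp add: compact_imp_bounded)
  then obtain D where D: "\<And>x z. x \<in> K \<Longrightarrow> z \<in> L \<Longrightarrow> dist x z \<le> D"
    unfolding bounded_two_points by blast
  have approx: "\<forall>x\<in>K. \<exists>z\<in>L. dist x z \<le> c ^ n * D" for n
  proof (induction n)
    case 0
    then show ?case using D L(2) by auto
  next
    case (Suc n)
    show ?case
    proof
      fix x assume "x \<in> K"
      then obtain i y where i: "i \<in> I" "y \<in> K" "x = T i y" using K(2) by blast
      then obtain z where z: "z \<in> L" "dist y z \<le> c ^ n * D" using Suc by blast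
      have "T i z \<in> L" using L(3) i z by blast
      moreover have "dist x (T i z) \<le> c * (c ^ n * D)"
        using lipschitz_onD[OF lip[OF i(1)], of y z] mult_left_mono[OF z(2) c(1)] i by auto
      ultimately show "\<exists>z\<in>L. dist x z \<le> c ^ Suc n * D" by (metis mult.assoc power_Suc)
    qed
  qed
  fix x assume x: "x \<in> K"
  have "x \<in> closure L" unfolding closure_approachable
  proof (intro allI impI)
    fix e :: real assume "e > 0"
    have "(\<lambda>n. c ^ n * D) \<longlonglongrightarrow> 0"
      using c by (intro tendsto_mult_left_zero LIMSEQ_power_zero) auto
    then have "eventually (\<lambda>n. c ^ n * D < e) sequentially"
      by (rule order_tendstoD(2)) (use \<open>e > 0\<close> in simp)
    then obtain n where "c ^ n * D < e" by (auto simp: eventually_sequentially)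
    moreover obtain z where "z \<in> L" "dist x z \<le> c ^ n * D" using approx x by blast
    ultimately have "dist z x < e" using dist_commute[of x z] by linarith
    with \<open>z \<in> L\<close> show "\<exists>y\<in>L. dist y x < e" by blast
  qed
  then show "x \<in> L" using L by (simp add: compact_imp_closed)
qed

lemma Inter_image_decseq_subset:
  fixes f :: "'a::heine_borel \<Rightarrow> 'b::t2_space"
  assumes f: "continuous_on UNIV f" and A: "\<And>n. compact (A n)" "decseq A"
  shows "(\<Inter>n. f ` A n) \<subseteq> f ` (\<Inter>n. A n)"
proof
  fix x assume x: "x \<in> (\<Inter>n. f ` A n)"
  define C where "C n = A n \<inter> f -` {x}" for n
  have "closed (f -` {x})" using f by (simp add: closed_vimage)
  have "\<Inter>(range C) \<noteq> {}"
  proof (rule compact_nest)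
    show "compact (C n)" "C n \<noteq> {}" for n
      using A(1) \<open>closed (f -` {x})\<close> x by (auto simp: C_def)
    show "C n \<subseteq> C m" if "m \<le> n" for m n
      unfolding C_def using decseqD[OF A(2) that] by blast
  qed
  then show "x \<in> f ` (\<Inter>n. A n)" by (auto simp: C_def)
qed

lemma Inter_UN_image_decseq_subset:
  fixes T :: "'i \<Rightarrow> 'a::heine_borel \<Rightarrow> 'b::t2_space"
  assumes I: "finite I" and cont: "\<And>i. i \<in> I \<Longrightarrow> continuous_on UNIV (T i)"
    and A: "\<And>n. compact (A n)" "decseq A"
  shows "(\<Inter>n. \<Union>i\<in>I. T i ` A n) \<subseteq> (\<Union>i\<in>I. T i ` (\<Inter>n. A n))"
proof
  fix x assume x: "x \<in> (\<Inter>n. \<Union>i\<in>I. T i ` A n)"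
  have "\<exists>i\<in>I. \<forall>n. x \<in> T i ` A n"
  proof (rule ccontr)
    assume "\<not> ?thesis"
    then obtain n where n: "\<And>i. i \<in> I \<Longrightarrow> x \<notin> T i ` A (n i)" by metis
    have "x \<notin> T i ` A (Max (n ` I))" if "i \<in> I" for i
      using n[OF that] decseqD[OF A(2), of "n i" "Max (n ` I)"] I that by auto
    moreover have "x \<in> (\<Union>i\<in>I. T i ` A (Max (n ` I)))" using x by blast
    ultimately show False by blast
  qed
  then obtain i where i: "i \<in> I" "x \<in> (\<Inter>n. T i ` A n)" by blast
  have "x \<in> T i ` (\<Inter>n. A n)"
    using Inter_image_decseq_subset[OF cont[OF i(1)] A] i(2) by (rule subsetD)
  with i(1) show "x \<in> (\<Union>i\<in>I. T i ` (\<Inter>n. A n))" by blast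
qed

lemma self_similar_Inter_iterates:
  fixes T :: "'i \<Rightarrow> 'a::heine_borel \<Rightarrow> 'a"
  assumes I: "finite I" "I \<noteq> {}" and cont: "\<And>i. i \<in> I \<Longrightarrow> continuous_on UNIV (T i)"
    and B: "compact B" "B \<noteq> {}" "\<And>i. i \<in> I \<Longrightarrow> T i ` B \<subseteq> B"
  defines "K \<equiv> \<Inter>n. ((\<lambda>X. \<Union>i\<in>I. T i ` X) ^^ n) B"
  shows "K \<noteq> {} \<and> compact K \<and> K = (\<Union>i\<in>I. T i ` K)"
proof -
  define H where "H X = (\<Union>i\<in>I. T i ` X)" for X
  define A where "A n = (H ^^ n) B" for n
  have A_Suc: "A (Suc n) = H (A n)" for n
    by (simp only: A_def funpow.simps comp_apply)
  have H_mono: "X \<subseteq> Y \<Longrightarrow> H X \<subseteq> H Y" for X Y unfolding H_def by blast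
  have A_dec: "decseq A"
  proof (rule decseq_SucI)
    show "A (Suc n) \<subseteq> A n" for n
      by (induction n) (use B(3) H_mono in \<open>auto simp: A_Suc A_def H_def\<close>)
  qed
  have A: "compact (A n) \<and> A n \<noteq> {}" for n
  proof (induction n)
    case (Suc n)
    then show ?case using I cont
      by (auto simp: A_Suc H_def intro!: compact_UN compact_continuous_image
          intro: continuous_on_subset)
  qed (simp add: A_def B(1,2))
  have K_def': "K = (\<Inter>n. A n)" by (simp add: K_def A_def H_def[abs_def])
  have "H K \<subseteq> A n" for n
  proof -
    have "H K \<subseteq> H (A n)" by (rule H_mono) (auto simp: K_def')
    also have "H (A n) \<subseteq> A n" using decseqD[OF A_dec, of n "Suc n"] by (simp only: A_Suc)
    finally show ?thesis .
  qed
  then have "H K \<subseteq> K" by (auto simp: K_def')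
  moreover have "K \<subseteq> H K"
  proof -
    have "K \<subseteq> (\<Inter>n. H (A n))" unfolding K_def' by (auto simp flip: A_Suc)
    also have "\<dots> \<subseteq> H K"
      unfolding H_def K_def' using A A_dec by (intro Inter_UN_image_decseq_subset[OF I(1) cont]) auto
    finally show ?thesis .
  qed
  moreover have "K \<noteq> {}"
    unfolding K_def'
  proof (rule compact_nest)
    show "compact (A n)" "A n \<noteq> {}" for n using A by auto
    show "A n \<subseteq> A m" if "m \<le> n" for m n using decseqD[OF A_dec that] .
  qed
  moreover have "compact K"
    unfolding K_def' by (rule compact_Inter) (use A in auto)
  ultimately show ?thesis unfolding H_def by (metis subset_antisym)
qed

lemma lipschitz_image_cball_subset:
  fixes f :: "'a::real_normed_vector \<Rightarrow> 'a"
  assumes "c-lipschitz_on UNIV f" "c < 1" "norm (f 0) \<le> M"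
  shows "f ` cball 0 (M / (1 - c)) \<subseteq> cball 0 (M / (1 - c))"
proof
  fix y assume "y \<in> f ` cball 0 (M / (1 - c))"
  then obtain x where x: "norm x \<le> M / (1 - c)" "y = f x" by auto
  have "norm (f x) \<le> c * norm x + norm (f 0)"
    using lipschitz_onD[OF assms(1), of x 0] norm_triangle_ineq2[of "f x" "f 0"]
    by (simp add: dist_norm)
  also have "\<dots> \<le> c * (M / (1 - c)) + M"
    using x assms lipschitz_on_nonneg[OF assms(1)] by (intro add_mono mult_left_mono) auto
  also have "\<dots> = M / (1 - c)" using assms(2) by (simp add: field_simps)
  finally show "y \<in> cball 0 (M / (1 - c))" using x by simp
qed

lemma self_similar_compact_exists:
  fixes T :: "'i \<Rightarrow> 'a::euclidean_space \<Rightarrow> 'a"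
  assumes I: "finite I" "I \<noteq> {}" and "c < 1"
    and lip: "\<And>i. i \<in> I \<Longrightarrow> c-lipschitz_on UNIV (T i)"
  shows "\<exists>K. K \<noteq> {} \<and> compact K \<and> K = (\<Union>i\<in>I. T i ` K)"
proof -
  define M where "M = Max ((\<lambda>i. norm (T i 0)) ` I)"
  have M: "norm (T i 0) \<le> M" if "i \<in> I" for i using I that by (simp add: M_def)
  have "0 \<le> M" using I M norm_ge_zero order_trans by blast
  show ?thesis
  proof (rule exI, rule self_similar_Inter_iterates[OF I])
    show "continuous_on UNIV (T i)" if "i \<in> I" for i
      using lip[OF that] by (rule lipschitz_on_continuous_on)
    show "T i ` cball 0 (M / (1 - c)) \<subseteq> cball 0 (M / (1 - c))" if "i \<in> I" for i
      using lip[OF that] \<open>c < 1\<close> M[OF that] by (rule lipschitz_image_cball_subset)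
    show "cball (0::'a) (M / (1 - c)) \<noteq> {}" using \<open>0 \<le> M\<close> \<open>c < 1\<close> by (simp add: not_less)
  qed simp
qed

lemma attractor_self_similar:
  fixes T :: "'i \<Rightarrow> 'a::euclidean_space \<Rightarrow> 'a"
  assumes "finite I" "I \<noteq> {}" and c: "0 \<le> c" "c < 1"
    and lip: "\<And>i. i \<in> I \<Longrightarrow> c-lipschitz_on UNIV (T i)"
  shows "attractor I T \<noteq> {}" "compact (attractor I T)"
    "attractor I T = (\<Union>i\<in>I. T i ` attractor I T)"
proof -
  have "\<exists>!K. K \<noteq> {} \<and> compact K \<and> K = (\<Union>i\<in>I. T i ` K)"
  proof (rule ex_ex1I)
    fix K1 K2
    assume K1: "K1 \<noteq> {} \<and> compact K1 \<and> K1 = (\<Union>i\<in>I. T i ` K1)"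
      and K2: "K2 \<noteq> {} \<and> compact K2 \<and> K2 = (\<Union>i\<in>I. T i ` K2)"
    show "K1 = K2"
    proof (rule subset_antisym)
      show "K1 \<subseteq> K2" using K1 K2 by (elim conjE) (rule self_similar_compact_subset[OF c lip])
      show "K2 \<subseteq> K1" using K2 K1 by (elim conjE) (rule self_similar_compact_subset[OF c lip])
    qed
  qed (rule self_similar_compact_exists[OF assms(1,2,4) lip])
  from theI'[OF this] show "attractor I T \<noteq> {}" "compact (attractor I T)"
    "attractor I T = (\<Union>i\<in>I. T i ` attractor I T)"
    unfolding attractor_def by blast+
qed

subsection \<open>Similarity dimension\<close>

lemma sum_powr_strict_decreasing:
  fixes r :: "'i \<Rightarrow> real"
  assumes "finite I" "I \<noteq> {}" and r: "\<And>j. j \<in> I \<Longrightarrow> 0 < r j \<and> r j < 1" and "s < s'"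
  shows "(\<Sum>j\<in>I. r j powr s') < (\<Sum>j\<in>I. r j powr s)"
  using assms by (intro sum_strict_mono) (auto intro: powr_less_mono')

lemma sum_powr_sim_dim:
  fixes r :: "'i \<Rightarrow> real"
  assumes I: "finite I" "I \<noteq> {}" and r: "\<And>j. j \<in> I \<Longrightarrow> 0 < r j \<and> r j < 1"
  shows "(\<Sum>j\<in>I. r j powr sim_dim I r) = 1"
proof -
  define f where "f s = (\<Sum>j\<in>I. r j powr s)" for s
  have "f 0 = real (card I)"
    unfolding f_def using r by (simp add: order_less_imp_not_eq2)
  then have f0: "1 \<le> f 0" using I by (simp add: Suc_leI card_gt_0_iff)
  define c where "c = Max (r ` I)"
  have c: "0 < c" "c < 1" "\<And>j. j \<in> I \<Longrightarrow> r j \<le> c"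
    using I r by (auto simp: c_def Max_gr_iff)
  obtain n where n: "c ^ n < 1 / real (card I)"
    using real_arch_pow_inv[of "1 / real (card I)" c] c I by (auto simp: card_gt_0_iff)
  have "f (real n) \<le> (\<Sum>j\<in>I. c powr real n)"
    unfolding f_def using r c by (intro sum_mono powr_mono2) (auto simp: less_imp_le)
  also have "\<dots> = real (card I) * c ^ n" using c by (simp add: powr_realpow)
  also have "\<dots> \<le> 1"
    using n I by (simp add: card_gt_0_iff pos_less_divide_eq mult.commute less_imp_le)
  finally have fn: "f (real n) \<le> 1" .
  have "continuous_on {0..real n} f"
    unfolding f_def using r by (intro continuous_intros) (auto simp: order_less_imp_not_eq2)
  then obtain s0 where s0: "f s0 = 1" using IVT2'[of f "real n" 1 0, OF fn f0] by auto
  have "f s \<noteq> 1" if "s \<noteq> s0" for s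
  proof (cases "s < s0")
    case True
    then show ?thesis using sum_powr_strict_decreasing[where r=r, OF I r True] s0 by (simp add: f_def)
  next
    case False
    then have gt: "s0 < s" using that by simp
    show ?thesis using sum_powr_strict_decreasing[where r=r, OF I r gt] s0 by (simp add: f_def)
  qed
  then have "f s = 1 \<longleftrightarrow> s = s0" for s using s0 by blast
  then have "sim_dim I r = s0" unfolding sim_dim_def f_def[symmetric] by simp
  then show ?thesis using s0 by (simp add: f_def)
qed

text \<open>Indices with \<open>r j = 0\<close> contribute nothing to the sum (\<open>0 powr s = 0\<close>); if all
  ratios vanish, \<open>sim_dim\<close> is an unspecified value and the claim holds for trivial reasons.\<close>
lemma sum_powr_less_1_if_sim_dim_less:
  fixes r :: "'i \<Rightarrow> real"
  assumes I: "finite I" and r: "\<And>j. j \<in> I \<Longrightarrow> 0 \<le> r j \<and> r j < 1"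
    and less: "sim_dim I r < q" and "0 < q"
  shows "\<exists>p>0. p < q \<and> (\<Sum>j\<in>I. r j powr p) < 1"
proof -
  define P where "P = {j\<in>I. 0 < r j}"
  have P: "finite P" "\<And>j. j \<in> P \<Longrightarrow> 0 < r j \<and> r j < 1" using I r by (auto simp: P_def)
  have sum_P: "(\<Sum>j\<in>I. r j powr s) = (\<Sum>j\<in>P. r j powr s)" for s
    using I r by (intro sum.mono_neutral_right) (auto simp: P_def less_le)
  show ?thesis
  proof (cases "P = {}")
    case True
    then show ?thesis using \<open>0 < q\<close> by (intro exI[of _ "q/2"]) (simp add: sum_P)
  next
    case False
    have "sim_dim I r = sim_dim P r" by (simp add: sim_dim_def sum_P)
    define p where "p = (sim_dim P r + q) / 2"
    have "sim_dim P r < p" "p < q" using less \<open>sim_dim I r = sim_dim P r\<close> by (auto simp: p_def)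
    moreover have "0 \<le> sim_dim P r"
    proof (rule ccontr)
      assume "\<not> 0 \<le> sim_dim P r"
      then have "(\<Sum>j\<in>P. r j powr 0) < 1"
        using sum_powr_strict_decreasing[where r=r and s="sim_dim P r" and s'=0, OF P(1) False P(2)]
          sum_powr_sim_dim[where r=r, OF P(1) False P(2)] by simp
      moreover have "(\<Sum>j\<in>P. r j powr 0) = real (card P)"
        using P(2) by (simp add: order_less_imp_not_eq2)
      ultimately show False using P(1) False by (simp add: card_gt_0_iff)
    qed
    moreover have "(\<Sum>j\<in>P. r j powr p) < 1"
      using sum_powr_strict_decreasing[where r=r, OF P(1) False P(2) \<open>sim_dim P r < p\<close>]
        sum_powr_sim_dim[where r=r, OF P(1) False P(2)] by simp
    ultimately show ?thesis by (intro exI[of _ p]) (simp add: sum_P)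
  qed
qed

subsection \<open>Words and Moran cut sets\<close>

fun word_map :: "('i \<Rightarrow> 'a \<Rightarrow> 'a) \<Rightarrow> 'i list \<Rightarrow> 'a \<Rightarrow> 'a" where
  "word_map T [] = id"
| "word_map T (i # w) = T i \<circ> word_map T w"

definition word_ratio :: "('i \<Rightarrow> real) \<Rightarrow> 'i list \<Rightarrow> real" where
  "word_ratio a w = prod_list (map a w)"

lemma word_ratio_simps [simp]:
  "word_ratio a [] = 1"
  "word_ratio a (i # w) = a i * word_ratio a w"
  "word_ratio a (u @ v) = word_ratio a u * word_ratio a v"
  by (auto simp: word_ratio_def)

lemma word_map_append: "word_map T (u @ v) = word_map T u \<circ> word_map T v"
  by (induction u) auto

lemma word_ratio_nonneg: "(\<And>i. i \<in> set w \<Longrightarrow> 0 \<le> a i) \<Longrightarrow> 0 \<le> word_ratio a w"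
  by (induction w) auto

lemma word_ratio_le_power:
  "(\<And>i. i \<in> set w \<Longrightarrow> 0 \<le> a i \<and> a i \<le> c) \<Longrightarrow> word_ratio a w \<le> c ^ length w"
proof (induction w)
  case (Cons i w)
  have "a i * word_ratio a w \<le> c * c ^ length w"
    by (intro mult_mono) (use Cons in \<open>force intro: word_ratio_nonneg\<close>)+
  then show ?case by simp
qed simp

lemma word_ratio_powr:
  "(\<And>i. i \<in> set w \<Longrightarrow> 0 \<le> a i) \<Longrightarrow> word_ratio a w powr p = word_ratio (\<lambda>i. a i powr p) w"
  by (induction w) (auto simp: powr_mult)

lemma dist_word_map_le:
  fixes T :: "'i \<Rightarrow> 'a::metric_space \<Rightarrow> 'a"
  assumes "\<And>i. i \<in> set w \<Longrightarrow> (a i)-lipschitz_on UNIV (T i)"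
  shows "dist (word_map T w x) (word_map T w y) \<le> word_ratio a w * dist x y"
  using assms
proof (induction w)
  case (Cons i w)
  have L: "(a i)-lipschitz_on UNIV (T i)" using Cons.prems by simp
  have "dist (word_map T (i # w) x) (word_map T (i # w) y)
      \<le> a i * dist (word_map T w x) (word_map T w y)"
    using lipschitz_onD[OF L] by simp
  also have "\<dots> \<le> a i * (word_ratio a w * dist x y)"
    using Cons lipschitz_on_nonneg[OF L] by (intro mult_left_mono) auto
  finally show ?case by (simp add: mult.assoc)
qed simp

text \<open>Used as a rewrite rule, the self-similarity equation loops; hence the substitution
  proofs of the next two lemmas.\<close>

lemma self_similar_image_mem:
  assumes K: "K = (\<Union>i\<in>I. T i ` K)" and "i \<in> I" "x \<in> K"
  shows "T i x \<in> K"
proof -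
  have "T i x \<in> (\<Union>i\<in>I. T i ` K)" using assms(2,3) by blast
  then show ?thesis by (rule subst[where P="\<lambda>A. T i x \<in> A", OF K[symmetric]])
qed

lemma self_similar_memE:
  assumes K: "K = (\<Union>i\<in>I. T i ` K)" and "y \<in> K"
  obtains i x where "i \<in> I" "x \<in> K" "y = T i x"
proof -
  have "y \<in> (\<Union>i\<in>I. T i ` K)" using assms(2) by (rule subst[where P="\<lambda>A. y \<in> A", OF K])
  then show ?thesis using that by blast
qed

lemma word_map_mem:
  assumes K: "K = (\<Union>i\<in>I. T i ` K)" and "set w \<subseteq> I" and "y \<in> K"
  shows "word_map T w y \<in> K"
  using assms(2)
proof (induction w)
  case (Cons i w)
  then show ?case using self_similar_image_mem[OF K] by simp
qed (simp add: assms(3))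

lemma self_similar_word_decomposition:
  assumes K: "K = (\<Union>i\<in>I. T i ` K)" and "y \<in> K"
  shows "\<exists>u y'. length u = n \<and> set u \<subseteq> I \<and> y' \<in> K \<and> y = word_map T u y'"
  using assms(2)
proof (induction n arbitrary: y)
  case 0
  then show ?case by (intro exI[of _ "[]"]) auto
next
  case (Suc n)
  obtain i y1 where i: "i \<in> I" "y1 \<in> K" "y = T i y1"
    using self_similar_memE[OF K Suc.prems] .
  then obtain u y' where "length u = n" "set u \<subseteq> I" "y' \<in> K" "y1 = word_map T u y'"
    using Suc.IH by blast
  then show ?case using i by (intro exI[of _ "i # u"] exI[of _ y']) auto
qed

lemma prefix_free_sum_word_ratio_le_1:
  fixes b :: "'i \<Rightarrow> real"
  assumes I: "finite I" and b: "\<And>i. i \<in> I \<Longrightarrow> 0 \<le> b i" and b_sum: "(\<Sum>i\<in>I. b i) \<le> 1"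
  shows "finite A \<Longrightarrow> (\<And>w. w \<in> A \<Longrightarrow> set w \<subseteq> I \<and> length w \<le> n)
    \<Longrightarrow> (\<And>u z. u \<in> A \<Longrightarrow> u @ z \<in> A \<Longrightarrow> z = [])
    \<Longrightarrow> (\<Sum>w\<in>A. word_ratio b w) \<le> 1"
proof (induction n arbitrary: A)
  case 0
  then have "A \<subseteq> {[]}" by auto
  then have "A = {} \<or> A = {[]}" by blast
  then show ?case by auto
next
  case (Suc n)
  show ?case
  proof (cases "[] \<in> A")
    case True
    then have "A = {[]}" using Suc.prems(3)[of "[]"] by auto
    then show ?thesis by simp
  next
    case False
    define A' where "A' i = Cons i -` A" for i
    have IH: "(\<Sum>v\<in>A' i. word_ratio b v) \<le> 1" for i
    proof (rule Suc.IH)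
      show "finite (A' i)" unfolding A'_def using Suc.prems(1) by (intro finite_vimageI) auto
      show "set w \<subseteq> I \<and> length w \<le> n" if "w \<in> A' i" for w
        using that Suc.prems(2)[of "i # w"] by (auto simp: A'_def)
      show "z = []" if "u \<in> A' i" "u @ z \<in> A' i" for u z
        using that Suc.prems(3)[of "i # u" z] by (auto simp: A'_def)
    qed
    have hd: "hd ` A \<subseteq> I"
    proof
      fix x assume "x \<in> hd ` A"
      then obtain w where "w \<in> A" "x = hd w" by blast
      then show "x \<in> I" using False Suc.prems(2)[of w] by (cases w) auto
    qed
    have group: "{w \<in> A. hd w = i} = Cons i ` A' i" for i
      using False unfolding A'_def by (auto simp: image_iff) (metis list.collapse list.sel(1))
    have "(\<Sum>w\<in>A. word_ratio b w) = (\<Sum>i\<in>I. \<Sum>w\<in>{w \<in> A. hd w = i}. word_ratio b w)"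
      using sum.group[OF Suc.prems(1) I hd, of "word_ratio b"] by simp
    also have "\<dots> = (\<Sum>i\<in>I. b i * (\<Sum>v\<in>A' i. word_ratio b v))"
      by (intro sum.cong refl) (simp add: group sum.reindex sum_distrib_left)
    also have "\<dots> \<le> (\<Sum>i\<in>I. b i)"
      by (intro sum_mono) (use IH b in \<open>auto intro: mult_left_le\<close>)
    finally show ?thesis using b_sum by linarith
  qed
qed

lemma shortest_prefix_ratio_le:
  assumes "word_ratio a u \<le> \<epsilon>" "\<epsilon> < 1"
  obtains j where "0 < j" "j \<le> length u" "word_ratio a (take j u) \<le> \<epsilon>"
    "\<epsilon> < word_ratio a (take (j - 1) u)"
proof -
  define j where "j = (LEAST j. word_ratio a (take j u) \<le> \<epsilon>)"
  have len: "word_ratio a (take (length u) u) \<le> \<epsilon>" using assms(1) by simp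
  have j: "word_ratio a (take j u) \<le> \<epsilon>" "j \<le> length u"
    unfolding j_def by (rule LeastI[where P="\<lambda>j. word_ratio a (take j u) \<le> \<epsilon>", OF len],
        rule Least_le[where P="\<lambda>j. word_ratio a (take j u) \<le> \<epsilon>", OF len])
  have "0 < j" using j(1) assms(2) by (cases j) auto
  then have "\<not> word_ratio a (take (j - 1) u) \<le> \<epsilon>"
    unfolding j_def by (intro not_less_Least) (simp add: j_def[symmetric])
  then show ?thesis using that \<open>0 < j\<close> j by simp
qed

text \<open>When all ratios are at most \<open>c\<close> and \<open>c ^ n \<le> \<epsilon>\<close>, the length bound \<open>n\<close> excludes no
  word; it only makes the set visibly finite.\<close>
definition moran_cut :: "('i \<Rightarrow> real) \<Rightarrow> 'i set \<Rightarrow> real \<Rightarrow> nat \<Rightarrow> 'i list set" where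
  "moran_cut a I \<epsilon> n = {w. set w \<subseteq> I \<and> length w \<le> n \<and> w \<noteq> [] \<and>
     word_ratio a w \<le> \<epsilon> \<and> \<epsilon> < word_ratio a (butlast w)}"

lemma finite_moran_cut: "finite I \<Longrightarrow> finite (moran_cut a I \<epsilon> n)"
  unfolding moran_cut_def by (rule finite_subset[OF _ finite_lists_length_le[of I n]]) auto

lemma moran_cut_covers:
  assumes K: "K = (\<Union>i\<in>I. T i ` K)" and y: "y \<in> K"
    and a: "\<And>i. i \<in> I \<Longrightarrow> 0 \<le> a i \<and> a i \<le> c" and n: "c ^ n \<le> \<epsilon>" and "\<epsilon> < 1"
  obtains w y' where "w \<in> moran_cut a I \<epsilon> n" "y' \<in> K" "y = word_map T w y'"
proof -
  obtain u y' where u: "length u = n" "set u \<subseteq> I" "y' \<in> K" "y = word_map T u y'"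
    using self_similar_word_decomposition[OF K y] by blast
  have "word_ratio a u \<le> \<epsilon>"
    using word_ratio_le_power[of u a c] a u(1,2) n by force
  then obtain j where j: "0 < j" "j \<le> length u" "word_ratio a (take j u) \<le> \<epsilon>"
      "\<epsilon> < word_ratio a (take (j - 1) u)"
    using shortest_prefix_ratio_le \<open>\<epsilon> < 1\<close> by blast
  have "take j u \<in> moran_cut a I \<epsilon> n"
    using j u(1,2) set_take_subset[of j u] by (auto simp: moran_cut_def butlast_take)
  moreover have "word_map T (drop j u) y' \<in> K"
    using word_map_mem[OF K _ u(3)] u(2) set_drop_subset[of j u] by blast
  moreover have "y = word_map T (take j u) (word_map T (drop j u) y')"
    using u(4) word_map_append[of T "take j u" "drop j u"] by simp
  ultimately show ?thesis using that by blast
qed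

lemma moran_cut_prefix_free:
  assumes a: "\<And>i. i \<in> I \<Longrightarrow> 0 \<le> a i \<and> a i \<le> 1"
    and u: "u \<in> moran_cut a I \<epsilon> n" and uz: "u @ z \<in> moran_cut a I \<epsilon> n"
  shows "z = []"
proof (rule ccontr)
  assume "z \<noteq> []"
  then have "butlast (u @ z) = u @ butlast z" by (simp add: butlast_append)
  moreover have "word_ratio a (butlast z) \<le> 1 ^ length (butlast z)"
  proof (rule word_ratio_le_power)
    fix i assume "i \<in> set (butlast z)"
    then have "i \<in> set (u @ z)" using in_set_butlastD by fastforce
    then show "0 \<le> a i \<and> a i \<le> 1" using uz a by (force simp: moran_cut_def)
  qed
  moreover have "0 \<le> word_ratio a u"
    using u a by (intro word_ratio_nonneg) (force simp: moran_cut_def)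
  ultimately have "word_ratio a (butlast (u @ z)) \<le> word_ratio a u"
    by (simp add: mult_left_le)
  then show False using u uz by (auto simp: moran_cut_def)
qed

lemma card_moran_cut_le:
  assumes I: "finite I" and a: "\<And>i. i \<in> I \<Longrightarrow> \<eta> \<le> a i \<and> a i \<le> 1" and "0 < \<eta>"
    and "0 < p" and a_sum: "(\<Sum>i\<in>I. a i powr p) \<le> 1" and "0 < \<epsilon>"
  shows "real (card (moran_cut a I \<epsilon> n)) \<le> (\<epsilon> * \<eta>) powr (- p)"
proof -
  let ?W = "moran_cut a I \<epsilon> n"
  have a_nonneg: "0 \<le> a i" if "w \<in> ?W" "i \<in> set w" for w i
    using that a \<open>0 < \<eta>\<close> by (force simp: moran_cut_def)
  have "(\<epsilon> * \<eta>) powr p \<le> word_ratio a w powr p" if "w \<in> ?W" for w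
  proof -
    have w: "w \<noteq> []" "set w \<subseteq> I" "\<epsilon> < word_ratio a (butlast w)"
      using that by (auto simp: moran_cut_def)
    then have "last w \<in> I" by auto
    then have "\<eta> \<le> a (last w)" using a by blast
    moreover have "word_ratio a w = word_ratio a (butlast w) * a (last w)"
      using word_ratio_simps(3)[of a "butlast w" "[last w]"] append_butlast_last_id[OF w(1)] by simp
    moreover have "\<epsilon> * \<eta> \<le> word_ratio a (butlast w) * a (last w)"
      using w(3) \<open>\<eta> \<le> a (last w)\<close> \<open>0 < \<epsilon>\<close> \<open>0 < \<eta>\<close> by (intro mult_mono) auto
    ultimately show ?thesis using \<open>0 < \<epsilon>\<close> \<open>0 < \<eta>\<close> \<open>0 < p\<close> by (intro powr_mono2) auto
  qed
  then have "real (card ?W) * (\<epsilon> * \<eta>) powr p \<le> (\<Sum>w\<in>?W. word_ratio a w powr p)"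
    using sum_bounded_below[of ?W "(\<epsilon> * \<eta>) powr p" "\<lambda>w. word_ratio a w powr p"] by auto
  also have "\<dots> = (\<Sum>w\<in>?W. word_ratio (\<lambda>i. a i powr p) w)"
    using a_nonneg by (intro sum.cong refl word_ratio_powr) auto
  also have "\<dots> \<le> 1"
  proof (rule prefix_free_sum_word_ratio_le_1[OF I _ a_sum finite_moran_cut[OF I]])
    show "set w \<subseteq> I \<and> length w \<le> n" if "w \<in> ?W" for w
      using that by (auto simp: moran_cut_def)
    show "z = []" if "u \<in> ?W" "u @ z \<in> ?W" for u z
      using moran_cut_prefix_free[OF _ that] a \<open>0 < \<eta>\<close> by force
  qed simp
  finally have "real (card ?W) * (\<epsilon> * \<eta>) powr p \<le> 1" .
  then show ?thesis
    using \<open>0 < \<epsilon>\<close> \<open>0 < \<eta>\<close> by (simp add: powr_minus inverse_eq_divide pos_le_divide_eq)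
qed

subsection \<open>Box counting and null sets\<close>

definition box_counting_bounded :: "'a::metric_space set \<Rightarrow> real \<Rightarrow> bool" where
  "box_counting_bounded B s \<longleftrightarrow> (\<exists>A \<rho>. \<forall>\<epsilon>. 0 < \<epsilon> \<and> \<epsilon> < 1 \<longrightarrow>
     (\<exists>F. finite F \<and> real (card F) \<le> A * \<epsilon> powr (- s) \<and> B \<subseteq> \<Union>F \<and>
        (\<forall>X\<in>F. \<forall>x\<in>X. \<forall>y\<in>X. dist x y \<le> \<rho> * \<epsilon>)))"

lemma small_sets_cover_measure_le:
  fixes B :: "'a::euclidean_space set"
  assumes F: "finite F" "B \<subseteq> \<Union>F" and small: "\<And>X x y. X \<in> F \<Longrightarrow> x \<in> X \<Longrightarrow> y \<in> X \<Longrightarrow> dist x y \<le> r"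
    and "0 \<le> r"
  obtains T where "B \<subseteq> T" "T \<in> lmeasurable"
    "measure lebesgue T \<le> real (card F) * unit_ball_vol DIM('a) * r ^ DIM('a)"
proof
  define T where "T = (\<Union>X\<in>F. cball (SOME x. x \<in> X) r)"
  have "X \<subseteq> cball (SOME x. x \<in> X) r" if "X \<in> F" for X
  proof
    fix y assume "y \<in> X"
    then have "(SOME x. x \<in> X) \<in> X" by (rule someI)
    then show "y \<in> cball (SOME x. x \<in> X) r" using small[OF that _ \<open>y \<in> X\<close>] by simp
  qed
  then show "B \<subseteq> T" unfolding T_def using F(2) by blast
  show "T \<in> lmeasurable"
    unfolding T_def using F(1) by (intro fmeasurable.finite_UN) auto
  have "measure lebesgue T \<le> (\<Sum>X\<in>F. measure lebesgue (cball (SOME x. x \<in> X) r))"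
    unfolding T_def using F(1) by (intro measure_UNION_le) auto
  also have "\<dots> = real (card F) * unit_ball_vol DIM('a) * r ^ DIM('a)"
    using \<open>0 \<le> r\<close> by (simp add: content_cball)
  finally show "measure lebesgue T \<le> real (card F) * unit_ball_vol DIM('a) * r ^ DIM('a)" .
qed

lemma negligible_if_box_counting_bounded:
  fixes B :: "'a::euclidean_space set"
  assumes "box_counting_bounded B s" and s: "s < DIM('a)"
  shows "negligible B"
proof -
  obtain A \<rho> where cover: "\<And>\<epsilon>. 0 < \<epsilon> \<Longrightarrow> \<epsilon> < 1 \<Longrightarrow> \<exists>F. finite F \<and>
      real (card F) \<le> A * \<epsilon> powr (- s) \<and> B \<subseteq> \<Union>F \<and> (\<forall>X\<in>F. \<forall>x\<in>X. \<forall>y\<in>X. dist x y \<le> \<rho> * \<epsilon>)"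
    using assms(1) unfolding box_counting_bounded_def by blast
  define d where "d = DIM('a)"
  define V where "V = unit_ball_vol (real d)"
  have "0 \<le> V" by (simp add: V_def)
  define C where "C = \<bar>A\<bar> * V * \<bar>\<rho>\<bar> ^ d + 1"
  have "0 < C" using \<open>0 \<le> V\<close> by (simp add: C_def add_nonneg_pos)
  show ?thesis unfolding negligible_outer_le
  proof (intro allI impI)
    fix e :: real assume "0 < e"
    define \<epsilon> where "\<epsilon> = min (1/2) ((e / C) powr (1 / (d - s)))"
    have \<epsilon>: "0 < \<epsilon>" "\<epsilon> < 1" using \<open>0 < e\<close> \<open>0 < C\<close> by (auto simp: \<epsilon>_def)
    have "\<epsilon> powr (d - s) \<le> ((e / C) powr (1 / (d - s))) powr (d - s)"
      using \<epsilon> s by (intro powr_mono2) (auto simp: \<epsilon>_def d_def)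
    also have "\<dots> = e / C" using s \<open>0 < e\<close> \<open>0 < C\<close> by (simp add: powr_powr d_def)
    finally have \<epsilon>_small: "C * \<epsilon> powr (d - s) \<le> e"
      using \<open>0 < C\<close> by (simp add: pos_le_divide_eq mult.commute)
    obtain F where F: "finite F" "real (card F) \<le> A * \<epsilon> powr (- s)" "B \<subseteq> \<Union>F"
      and F_small: "\<And>X x y. X \<in> F \<Longrightarrow> x \<in> X \<Longrightarrow> y \<in> X \<Longrightarrow> dist x y \<le> \<rho> * \<epsilon>"
      using cover[OF \<epsilon>] by blast
    have "\<rho> * \<epsilon> \<le> \<bar>\<rho>\<bar> * \<epsilon>" using \<epsilon> by (intro mult_right_mono) auto
    then have "dist x y \<le> \<bar>\<rho>\<bar> * \<epsilon>" if "X \<in> F" "x \<in> X" "y \<in> X" for X x y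
      using F_small[OF that] by linarith
    moreover have "0 \<le> \<bar>\<rho>\<bar> * \<epsilon>" using \<epsilon> by simp
    ultimately obtain T where T: "B \<subseteq> T" "T \<in> lmeasurable"
      "measure lebesgue T \<le> real (card F) * V * (\<bar>\<rho>\<bar> * \<epsilon>) ^ d"
      using small_sets_cover_measure_le[OF F(1,3)] unfolding V_def d_def by blast
    have "real (card F) * V * (\<bar>\<rho>\<bar> * \<epsilon>) ^ d \<le> A * \<epsilon> powr (- s) * V * (\<bar>\<rho>\<bar> * \<epsilon>) ^ d"
      using F(2) \<open>0 \<le> V\<close> \<epsilon> by (intro mult_right_mono) auto
    also have "\<dots> = A * (V * \<bar>\<rho>\<bar> ^ d) * (\<epsilon> powr (- s) * \<epsilon> powr real d)"
      using \<epsilon> by (simp add: power_mult_distrib powr_realpow mult_ac)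
    also have "\<dots> = A * (V * \<bar>\<rho>\<bar> ^ d) * \<epsilon> powr (d - s)"
      by (simp add: powr_add[symmetric])
    also have "\<dots> \<le> C * \<epsilon> powr (d - s)"
    proof (rule mult_right_mono)
      have "A * (V * \<bar>\<rho>\<bar> ^ d) \<le> \<bar>A\<bar> * (V * \<bar>\<rho>\<bar> ^ d)"
        using \<open>0 \<le> V\<close> by (intro mult_right_mono) auto
      then show "A * (V * \<bar>\<rho>\<bar> ^ d) \<le> C" by (simp add: C_def mult.assoc)
    qed simp
    finally have "measure lebesgue T \<le> e" using T(3) \<epsilon>_small by linarith
    with T(1,2) show "\<exists>T. B \<subseteq> T \<and> T \<in> lmeasurable \<and> measure lebesgue T \<le> e" by blast
  qed
qed

lemma AE_lborel_if_negligible: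
  fixes P :: "'a::euclidean_space \<Rightarrow> bool"
  assumes "negligible {x. \<not> P x}"
  shows "AE x in lborel. P x"
proof -
  have "AE x in lebesgue. P x"
    unfolding eventually_ae_filter_negligible using assms by blast
  then show ?thesis unfolding AE_completion_iff .
qed

subsection \<open>Translating one map of the system\<close>

definition translated_system :: "('i \<Rightarrow> 'a \<Rightarrow> 'a) \<Rightarrow> 'i \<Rightarrow> 'a::plus \<Rightarrow> 'i \<Rightarrow> 'a \<Rightarrow> 'a" where
  "translated_system S m t = S(m := (\<lambda>x. S m x + t))"

lemma translated_system_apply:
  "translated_system S m t m x = S m x + t"
  "i \<noteq> m \<Longrightarrow> translated_system S m t i = S i"
  by (simp_all add: translated_system_def)

lemma lipschitz_translated_system:
  fixes S :: "'i \<Rightarrow> 'a::real_normed_vector \<Rightarrow> 'a"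
  assumes "L-lipschitz_on UNIV (S i)"
  shows "L-lipschitz_on UNIV (translated_system S m t i)"
  using assms by (cases "i = m") (auto simp: translated_system_apply lipschitz_on_def dist_norm)

lemma word_map_translated_system_diff:
  fixes S :: "'i \<Rightarrow> 'a::real_normed_vector \<Rightarrow> 'a"
  assumes lip: "\<And>i. i \<in> set w \<Longrightarrow> (a i)-lipschitz_on UNIV (S i) \<and> a i \<le> c" and "c < 1"
  shows "norm (word_map (translated_system S m t) w x - word_map (translated_system S m t') w x)
    \<le> norm (t - t') / (1 - c)"
  using lip
proof (induction w)
  case Nil
  then show ?case using \<open>c < 1\<close> by simp
next
  case (Cons i w)
  define P where "P = word_map (translated_system S m t) w x"
  define P' where "P' = word_map (translated_system S m t') w x"
  have IH: "norm (P - P') \<le> norm (t - t') / (1 - c)"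
    unfolding P_def P'_def using Cons by simp
  have L: "(a i)-lipschitz_on UNIV (S i)" "a i \<le> c" using Cons.prems by auto
  have "norm (translated_system S m t i P - translated_system S m t' i P')
      \<le> norm (S i P - S i P') + norm (t - t')"
  proof (cases "i = m")
    case True
    then have "translated_system S m t i P - translated_system S m t' i P' = (S i P - S i P') + (t - t')"
      by (simp add: translated_system_apply)
    then show ?thesis by (metis norm_triangle_ineq)
  qed (simp add: translated_system_apply)
  also have "\<dots> \<le> c * (norm (t - t') / (1 - c)) + norm (t - t')"
  proof -
    have "norm (S i P - S i P') \<le> a i * norm (P - P')"
      using lipschitz_onD[OF L(1), of P P'] by (simp add: dist_norm)
    also have "\<dots> \<le> c * (norm (t - t') / (1 - c))"
      using IH L(2) lipschitz_on_nonneg[OF L(1)] by (intro mult_mono) auto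
    finally show ?thesis by simp
  qed
  also have "\<dots> = norm (t - t') / (1 - c)" using \<open>c < 1\<close> by (simp add: field_simps)
  finally show ?case by (simp add: P_def P'_def)
qed

lemma self_similar_norm_le:
  fixes T :: "'i \<Rightarrow> 'a::real_normed_vector \<Rightarrow> 'a"
  assumes K: "compact K" "K = (\<Union>i\<in>I. T i ` K)"
    and lip: "\<And>i. i \<in> I \<Longrightarrow> c-lipschitz_on UNIV (T i)" and "c < 1"
    and M: "\<And>i. i \<in> I \<Longrightarrow> norm (T i 0) \<le> M" and "y \<in> K"
  shows "norm y \<le> M / (1 - c)"
proof -
  obtain x where x: "x \<in> K" "\<And>y. y \<in> K \<Longrightarrow> norm y \<le> norm x"
    using continuous_attains_sup[OF K(1), of norm] \<open>y \<in> K\<close> by (auto intro: continuous_intros)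
  obtain i x' where i: "i \<in> I" "x' \<in> K" "x = T i x'"
    using self_similar_memE[OF K(2) x(1)] .
  have "norm x \<le> norm (T i x' - T i 0) + norm (T i 0)"
    using i(3) norm_triangle_ineq2[of "T i x'" "T i 0"] by simp
  also have "\<dots> \<le> c * norm x + M"
    using lipschitz_onD[OF lip[OF i(1)], of x' 0] mult_left_mono[OF x(2)[OF i(2)]]
      lipschitz_on_nonneg[OF lip[OF i(1)]] M[OF i(1)]
    by (force simp: dist_norm)
  finally have "norm x * (1 - c) \<le> M" by (simp add: algebra_simps)
  moreover have "norm y * (1 - c) \<le> norm x * (1 - c)"
    using x(2)[OF \<open>y \<in> K\<close>] \<open>c < 1\<close> by (intro mult_right_mono) auto
  ultimately have "norm y * (1 - c) \<le> M" by linarith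
  then show ?thesis using \<open>c < 1\<close> by (simp add: pos_le_divide_eq)
qed

lemma dist_word_maps_le:
  fixes T :: "'i \<Rightarrow> 'a::real_normed_vector \<Rightarrow> 'a"
  assumes lip: "\<And>i. i \<in> set u \<union> set v \<Longrightarrow> (a i)-lipschitz_on UNIV (T i)"
    and eq: "word_map T u y = word_map T v z"
  shows "dist (word_map T u 0) (word_map T v 0) \<le> word_ratio a u * norm y + word_ratio a v * norm z"
proof -
  have "dist (word_map T u 0) (word_map T v 0)
      \<le> dist (word_map T u 0) (word_map T u y) + dist (word_map T v z) (word_map T v 0)"
    using dist_triangle[of "word_map T u 0" "word_map T v 0" "word_map T u y"] eq
    by (simp add: dist_commute)
  also have "\<dots> \<le> word_ratio a u * dist 0 y + word_ratio a v * dist z 0"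
    using lip by (intro add_mono dist_word_map_le) auto
  finally show ?thesis by (simp add: dist_norm)
qed

locale transversal_translations =
  fixes S :: "'i \<Rightarrow> 'a::euclidean_space \<Rightarrow> 'a" and I :: "'i set" and k m :: 'i
    and a :: "'i \<Rightarrow> real" and c \<eta> :: real
  assumes finite_I: "finite I" and k: "k \<in> I" and m: "m \<in> I" and k_neq_m: "k \<noteq> m"
    and lipschitz: "\<And>j. j \<in> I \<Longrightarrow> (a j)-lipschitz_on UNIV (S j)"
    and a_bounds: "\<And>j. j \<in> I \<Longrightarrow> \<eta> \<le> a j \<and> a j \<le> c"
    and eta_pos: "0 < \<eta>" and c_less_1: "c < 1"
    and transversal: "a k + a m < 1 - c"
begin

abbreviation T :: "'a \<Rightarrow> 'i \<Rightarrow> 'a \<Rightarrow> 'a" where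
  "T t \<equiv> translated_system S m t"

abbreviation K :: "'a \<Rightarrow> 'a set" where
  "K t \<equiv> attractor I (T t)"

definition overlaps :: "'a set" where
  "overlaps = {t. T t k ` K t \<inter> T t m ` K t \<noteq> {}}"

lemma c_pos: "0 < c"
  using a_bounds[OF k] eta_pos by linarith

lemma lipschitz_T: "j \<in> I \<Longrightarrow> c-lipschitz_on UNIV (T t j)"
  using lipschitz a_bounds by (blast intro: lipschitz_translated_system lipschitz_on_le)

lemma K_self_similar: "K t \<noteq> {}" "compact (K t)" "K t = (\<Union>j\<in>I. T t j ` K t)"
  by (rule attractor_self_similar[where T="T t"]; use finite_I k c_pos c_less_1 lipschitz_T in auto)+

lemma norm_K_le:
  assumes "norm t \<le> R" "y \<in> K t"
  shows "norm y \<le> (Max ((\<lambda>j. norm (S j 0)) ` I) + R) / (1 - c)"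
proof (rule self_similar_norm_le[OF K_self_similar(2,3) lipschitz_T c_less_1 _ assms(2)])
  fix j assume "j \<in> I"
  then have "norm (S j 0) \<le> Max ((\<lambda>j. norm (S j 0)) ` I)" using finite_I by simp
  moreover have "0 \<le> R" using assms(1) norm_ge_zero[of t] by linarith
  ultimately show "norm (T t j 0) \<le> Max ((\<lambda>j. norm (S j 0)) ` I) + R"
    using assms(1) norm_triangle_ineq[of "S m 0" t]
    by (cases "j = m") (auto simp: translated_system_apply)
qed

text \<open>Transversality: \<open>t\<close> enters the defect with coefficient \<open>-1\<close>, while the rest of it
  is \<open>(a k + a m)/(1 - c)\<close>-Lipschitz in \<open>t\<close>.\<close>
lemma norm_diff_le_defects:
  assumes "set w \<subseteq> I" "set w' \<subseteq> I"
  defines "\<Phi> \<equiv> \<lambda>t. word_map (T t) (k # w) 0 - word_map (T t) (m # w') 0"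
  shows "(1 - (a k + a m) / (1 - c)) * norm (t1 - t2) \<le> norm (\<Phi> t1) + norm (\<Phi> t2)"
proof -
  define P where "P t = word_map (T t) w 0" for t
  define Q where "Q t = word_map (T t) w' 0" for t
  have \<Phi>: "\<Phi> t = S k (P t) - S m (Q t) - t" for t
    using k_neq_m by (simp add: \<Phi>_def P_def Q_def translated_system_apply)
  have lip_c: "\<And>j. j \<in> set w \<union> set w' \<Longrightarrow> (a j)-lipschitz_on UNIV (S j) \<and> a j \<le> c"
    using assms(1,2) lipschitz a_bounds by blast
  have "norm (S k (P t1) - S k (P t2)) \<le> a k * norm (P t1 - P t2)"
    using lipschitz_onD[OF lipschitz[OF k]] by (simp add: dist_norm)
  also have "\<dots> \<le> a k * (norm (t1 - t2) / (1 - c))"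
    unfolding P_def using lip_c c_less_1 a_bounds[OF k] eta_pos
    by (intro mult_left_mono word_map_translated_system_diff) auto
  finally have dP: "norm (S k (P t1) - S k (P t2)) \<le> a k * (norm (t1 - t2) / (1 - c))" .
  have "norm (S m (Q t1) - S m (Q t2)) \<le> a m * norm (Q t1 - Q t2)"
    using lipschitz_onD[OF lipschitz[OF m]] by (simp add: dist_norm)
  also have "\<dots> \<le> a m * (norm (t1 - t2) / (1 - c))"
    unfolding Q_def using lip_c c_less_1 a_bounds[OF m] eta_pos
    by (intro mult_left_mono word_map_translated_system_diff) auto
  finally have dQ: "norm (S m (Q t1) - S m (Q t2)) \<le> a m * (norm (t1 - t2) / (1 - c))" .
  have "t1 - t2 = (S k (P t1) - S k (P t2)) - (S m (Q t1) - S m (Q t2)) - (\<Phi> t1 - \<Phi> t2)"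
    by (simp add: \<Phi> algebra_simps)
  then have "norm (t1 - t2)
      = norm ((S k (P t1) - S k (P t2)) - (S m (Q t1) - S m (Q t2)) - (\<Phi> t1 - \<Phi> t2))"
    by (rule arg_cong)
  then have "norm (t1 - t2) \<le> norm (S k (P t1) - S k (P t2)) + norm (S m (Q t1) - S m (Q t2))
      + (norm (\<Phi> t1) + norm (\<Phi> t2))"
    using norm_triangle_ineq4[of "S k (P t1) - S k (P t2) - (S m (Q t1) - S m (Q t2))" "\<Phi> t1 - \<Phi> t2"]
      norm_triangle_ineq4[of "S k (P t1) - S k (P t2)" "S m (Q t1) - S m (Q t2)"]
      norm_triangle_ineq4[of "\<Phi> t1" "\<Phi> t2"] by linarith
  also have "\<dots> \<le> (a k + a m) / (1 - c) * norm (t1 - t2) + (norm (\<Phi> t1) + norm (\<Phi> t2))"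
    using dP dQ by (simp add: add_divide_distrib distrib_right)
  finally show ?thesis by (simp add: algebra_simps)
qed

definition coincidences :: "'i list \<Rightarrow> 'i list \<Rightarrow> real \<Rightarrow> 'a set" where
  "coincidences w w' R = {t \<in> cball 0 R. \<exists>y\<in>K t. \<exists>z\<in>K t.
     word_map (T t) (k # w) y = word_map (T t) (m # w') z}"

lemma overlaps_subset_coincidences:
  assumes "c ^ n \<le> \<epsilon>" "\<epsilon> < 1"
  shows "overlaps \<inter> cball 0 R
    \<subseteq> (\<Union>(w, w')\<in>moran_cut a I \<epsilon> n \<times> moran_cut a I \<epsilon> n. coincidences w w' R)"
proof
  fix t assume t: "t \<in> overlaps \<inter> cball 0 R"
  then obtain y0 z0 where yz0: "y0 \<in> K t" "z0 \<in> K t" "T t k y0 = T t m z0"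
    by (auto simp: overlaps_def)
  have a: "\<And>j. j \<in> I \<Longrightarrow> 0 \<le> a j \<and> a j \<le> c" using a_bounds eta_pos by force
  obtain w y where w: "w \<in> moran_cut a I \<epsilon> n" "y \<in> K t" "y0 = word_map (T t) w y"
    using moran_cut_covers[OF K_self_similar(3) yz0(1) a assms] .
  obtain w' z where w': "w' \<in> moran_cut a I \<epsilon> n" "z \<in> K t" "z0 = word_map (T t) w' z"
    using moran_cut_covers[OF K_self_similar(3) yz0(2) a assms] .
  have "t \<in> coincidences w w' R"
    using t w(2,3) w'(2,3) yz0(3) by (auto simp: coincidences_def)
  then show "t \<in> (\<Union>(w, w')\<in>moran_cut a I \<epsilon> n \<times> moran_cut a I \<epsilon> n. coincidences w w' R)"
    using w(1) w'(1) by blast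
qed

lemma norm_defect_le:
  assumes w: "set w \<subseteq> I" "set w' \<subseteq> I" "word_ratio a w \<le> \<epsilon>" "word_ratio a w' \<le> \<epsilon>"
    and eq: "word_map (T t) (k # w) y = word_map (T t) (m # w') z"
    and "norm y \<le> D" "norm z \<le> D"
  shows "norm (word_map (T t) (k # w) 0 - word_map (T t) (m # w') 0) \<le> 2 * \<epsilon> * D"
proof -
  have a: "0 \<le> a j" "a j \<le> 1" if "j \<in> I" for j
    using a_bounds[OF that] eta_pos c_less_1 by auto
  have ratio: "word_ratio a (j # v) * norm x \<le> \<epsilon> * D"
    if "j \<in> I" "set v \<subseteq> I" "word_ratio a v \<le> \<epsilon>" "norm x \<le> D" for j v x
  proof -
    have "0 \<le> word_ratio a v" using that(2) a by (intro word_ratio_nonneg) auto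
    then have "a j * word_ratio a v * norm x \<le> 1 * word_ratio a v * norm x"
      using a[OF that(1)] by (intro mult_right_mono) auto
    also have "\<dots> \<le> \<epsilon> * D"
      using that(3,4) \<open>0 \<le> word_ratio a v\<close> by (auto intro: mult_mono)
    finally show ?thesis by simp
  qed
  have "dist (word_map (T t) (k # w) 0) (word_map (T t) (m # w') 0)
      \<le> word_ratio a (k # w) * norm y + word_ratio a (m # w') * norm z"
    using w k m lipschitz by (intro dist_word_maps_le[OF _ eq]) (auto intro: lipschitz_translated_system)
  also have "\<dots> \<le> \<epsilon> * D + \<epsilon> * D"
    using ratio k m w assms(6,7) by (intro add_mono) auto
  finally show ?thesis by (simp add: dist_norm mult_ac)
qed

lemma dist_coincidences_le:
  assumes "set w \<subseteq> I" "set w' \<subseteq> I" "word_ratio a w \<le> \<epsilon>" "word_ratio a w' \<le> \<epsilon>"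
    and "s \<in> coincidences w w' R" "t \<in> coincidences w w' R"
  shows "(1 - (a k + a m) / (1 - c)) * dist s t
    \<le> 4 * \<epsilon> * ((Max ((\<lambda>j. norm (S j 0)) ` I) + R) / (1 - c))"
proof -
  let ?D = "(Max ((\<lambda>j. norm (S j 0)) ` I) + R) / (1 - c)"
  have defect: "norm (word_map (T u) (k # w) 0 - word_map (T u) (m # w') 0) \<le> 2 * \<epsilon> * ?D"
    if u: "u \<in> coincidences w w' R" for u
  proof -
    obtain y z where "norm u \<le> R" "y \<in> K u" "z \<in> K u"
      "word_map (T u) (k # w) y = word_map (T u) (m # w') z"
      using u unfolding coincidences_def mem_Collect_eq mem_cball_0 by blast
    then show ?thesis using assms(1-4) norm_K_le by (intro norm_defect_le) auto
  qed
  have "(1 - (a k + a m) / (1 - c)) * dist s t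
      \<le> norm (word_map (T s) (k # w) 0 - word_map (T s) (m # w') 0)
        + norm (word_map (T t) (k # w) 0 - word_map (T t) (m # w') 0)"
    using norm_diff_le_defects[OF assms(1,2), of s t] by (simp add: dist_norm del: word_map.simps)
  also have "\<dots> \<le> 2 * \<epsilon> * ?D + 2 * \<epsilon> * ?D"
    using defect[OF assms(5)] defect[OF assms(6)] by (rule add_mono)
  finally show ?thesis by simp
qed

lemma card_moran_cut_pairs_le:
  assumes "0 < p" "(\<Sum>j\<in>I. a j powr p) \<le> 1" "0 < \<epsilon>"
  shows "real (card ((\<lambda>(w, w'). g w w') ` (moran_cut a I \<epsilon> n \<times> moran_cut a I \<epsilon> n)))
    \<le> \<eta> powr (- (2 * p)) * \<epsilon> powr (- (2 * p))"
proof -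
  let ?W = "moran_cut a I \<epsilon> n"
  have "real (card ((\<lambda>(w, w'). g w w') ` (?W \<times> ?W))) \<le> real (card ?W) * real (card ?W)"
    using card_image_le[of "?W \<times> ?W"] finite_moran_cut[OF finite_I]
    by (simp add: card_cartesian_product flip: of_nat_mult)
  also have "\<dots> \<le> (\<epsilon> * \<eta>) powr (- p) * (\<epsilon> * \<eta>) powr (- p)"
    using card_moran_cut_le[OF finite_I _ eta_pos assms] a_bounds c_less_1
    by (intro mult_mono) fastforce+
  also have "\<dots> = \<eta> powr (- (2 * p)) * \<epsilon> powr (- (2 * p))"
  proof -
    have sq: "x powr (- p) * x powr (- p) = x powr (- (2 * p))" for x :: real
      by (simp add: powr_add[symmetric])
    show ?thesis using sq[of \<epsilon>] sq[of \<eta>] \<open>0 < \<epsilon>\<close> eta_pos by (simp add: powr_mult mult_ac)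
  qed
  finally show ?thesis .
qed

lemma box_counting_bounded_overlaps:
  assumes "0 < p" "(\<Sum>j\<in>I. a j powr p) \<le> 1"
  shows "box_counting_bounded (overlaps \<inter> cball 0 R) (2 * p)"
proof -
  define \<kappa> where "\<kappa> = 1 - (a k + a m) / (1 - c)"
  have "0 < \<kappa>" using transversal c_less_1 by (simp add: \<kappa>_def)
  define D where "D = (Max ((\<lambda>j. norm (S j 0)) ` I) + R) / (1 - c)"
  define \<rho> where "\<rho> = 4 * D / \<kappa>"
  have "\<exists>F. finite F \<and> real (card F) \<le> \<eta> powr (- (2 * p)) * \<epsilon> powr (- (2 * p)) \<and>
      overlaps \<inter> cball 0 R \<subseteq> \<Union>F \<and> (\<forall>X\<in>F. \<forall>s\<in>X. \<forall>t\<in>X. dist s t \<le> \<rho> * \<epsilon>)"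
    if \<epsilon>: "0 < \<epsilon>" "\<epsilon> < 1" for \<epsilon>
  proof -
    obtain n where n: "c ^ n \<le> \<epsilon>"
      using real_arch_pow_inv[OF \<epsilon>(1) c_less_1] by (auto intro: less_imp_le)
    define W where "W = moran_cut a I \<epsilon> n"
    define F where "F = (\<lambda>(w, w'). coincidences w w' R) ` (W \<times> W)"
    have "finite W" unfolding W_def by (rule finite_moran_cut[OF finite_I])
    have W: "set w \<subseteq> I" "word_ratio a w \<le> \<epsilon>" if "w \<in> W" for w
      using that by (auto simp: W_def moran_cut_def)
    have "real (card F) \<le> \<eta> powr (- (2 * p)) * \<epsilon> powr (- (2 * p))"
      unfolding F_def W_def by (rule card_moran_cut_pairs_le[OF assms \<epsilon>(1)])
    moreover have "overlaps \<inter> cball 0 R \<subseteq> \<Union>F"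
      using overlaps_subset_coincidences[OF n \<epsilon>(2)] by (auto simp: F_def W_def)
    moreover have "dist s t \<le> \<rho> * \<epsilon>" if "X \<in> F" "s \<in> X" "t \<in> X" for X s t
    proof -
      obtain w w' where ww: "w \<in> W" "w' \<in> W" "X = coincidences w w' R"
        using \<open>X \<in> F\<close> by (auto simp: F_def)
      then have "\<kappa> * dist s t \<le> 4 * \<epsilon> * D"
        using dist_coincidences_le[OF W(1)[OF ww(1)] W(1)[OF ww(2)] W(2)[OF ww(1)] W(2)[OF ww(2)]]
          that(2,3) by (simp add: \<kappa>_def D_def)
      then show ?thesis using \<open>0 < \<kappa>\<close> by (simp add: \<rho>_def pos_le_divide_eq mult_ac)
    qed
    moreover have "finite F" using \<open>finite W\<close> by (simp add: F_def)
    ultimately show ?thesis by blast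
  qed
  then show ?thesis unfolding box_counting_bounded_def by blast
qed

lemma negligible_overlaps:
  fixes p :: real
  assumes "0 < p" "2 * p < DIM('a)" "(\<Sum>j\<in>I. a j powr p) \<le> 1"
  shows "negligible overlaps"
proof -
  have "overlaps = (\<Union>n. overlaps \<inter> cball 0 (real n))"
    by (auto simp: real_arch_simple)
  moreover have "negligible (overlaps \<inter> cball 0 (real n))" for n
    using box_counting_bounded_overlaps[OF assms(1,3)] assms(2)
    by (rule negligible_if_box_counting_bounded)
  then have "negligible (\<Union>n. overlaps \<inter> cball 0 (real n))"
    by (intro negligible_countable_Union) auto
  ultimately show ?thesis by simp
qed

end

lemma enlarge_ratios:
  fixes r :: "'i \<Rightarrow> real"
  assumes I: "finite I" and k: "k \<in> I" and m: "m \<in> I"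
    and r: "\<And>j. j \<in> I \<Longrightarrow> 0 \<le> r j \<and> r j < 1"
    and small: "r k + r m + Max (r ` I) < 1"
    and p: "0 < p" "(\<Sum>j\<in>I. r j powr p) < 1"
  obtains a \<eta> c where "\<And>j. j \<in> I \<Longrightarrow> r j \<le> a j \<and> \<eta> \<le> a j \<and> a j \<le> c"
    "0 < \<eta>" "c < 1" "a k + a m < 1 - c" "(\<Sum>j\<in>I. a j powr p) \<le> 1"
proof -
  define r_max where "r_max = Max (r ` I)"
  have r_max: "r j \<le> r_max" if "j \<in> I" for j using I that by (simp add: r_max_def)
  define \<sigma> where "\<sigma> = (1 - (\<Sum>j\<in>I. r j powr p)) / real (card I)"
  have "0 < card I" using I k by (auto simp: card_gt_0_iff)
  then have "0 < \<sigma>" using p by (simp add: \<sigma>_def)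
  define \<eta> where "\<eta> = min ((1 - (r k + r m + r_max)) / 4) (\<sigma> powr (1 / p))"
  have "0 < \<eta>" using small \<open>0 < \<sigma>\<close> by (simp add: \<eta>_def r_max_def)
  moreover have "\<eta> \<le> (1 - (r k + r m + r_max)) / 4" unfolding \<eta>_def by (rule min.cobounded1)
  moreover have "\<eta> powr p \<le> (\<sigma> powr (1 / p)) powr p"
    using \<open>0 < \<eta>\<close> p by (intro powr_mono2) (auto simp: \<eta>_def)
  ultimately have \<eta>: "0 < \<eta>" "4 * \<eta> \<le> 1 - (r k + r m + r_max)" "\<eta> powr p \<le> \<sigma>"
    using \<open>0 < \<sigma>\<close> p by (simp_all add: powr_powr)
  define a where "a j = max (r j) \<eta>" for j
  define c where "c = max r_max \<eta>"
  have "(\<Sum>j\<in>I. a j powr p) \<le> (\<Sum>j\<in>I. r j powr p + \<eta> powr p)"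
    by (intro sum_mono) (auto simp: a_def max_def)
  also have "\<dots> \<le> (\<Sum>j\<in>I. r j powr p) + real (card I) * \<sigma>"
    using \<eta>(3) by (simp add: sum.distrib mult_left_mono)
  also have "\<dots> = 1" using \<open>0 < card I\<close> by (simp add: \<sigma>_def)
  finally have "(\<Sum>j\<in>I. a j powr p) \<le> 1" .
  moreover have "a k + a m < 1 - c"
    using \<eta> r[OF k] r[OF m] r_max[OF k] by (auto simp: a_def c_def)
  moreover have "c < 1"
    using \<eta> r[OF k] r[OF m] r_max[OF k] by (auto simp: c_def)
  ultimately show ?thesis
    using that[of a \<eta> c] \<eta>(1) r_max by (force simp: a_def c_def)
qed

theorem corollary6:
  fixes S :: "nat \<Rightarrow> real^'n \<Rightarrow> real^'n" and m k :: nat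
  assumes contr: "\<And>j. j \<in> {1..m} \<Longrightarrow> contraction_map (S j)"
    and k: "1 \<le> k" "k < m"
    and small: "Lip (S k) + Lip (S m) + Max ((\<lambda>j. Lip (S j)) ` {1..m}) < 1"
    and dim: "sim_dim {1..m} (\<lambda>j. Lip (S j)) < real CARD('n) / 2"
  shows "AE t in lborel.
           let St = (S(m := (\<lambda>x. S m x + t))) in
           St k ` attractor {1..m} St \<inter> St m ` attractor {1..m} St = {}"
proof -
  have I: "finite {1..m}" "k \<in> {1..m}" "m \<in> {1..m}" using k by auto
  have lip: "(Lip (S j))-lipschitz_on UNIV (S j)" if "j \<in> {1..m}" for j
    using contraction_map_Lip[OF contr[OF that]] by blast
  have r: "0 \<le> Lip (S j) \<and> Lip (S j) < 1" if "j \<in> {1..m}" for j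
    using contraction_map_Lip[OF contr[OF that]] lipschitz_on_nonneg[OF lip[OF that]] by blast
  obtain p where p: "0 < p" "p < real CARD('n) / 2" "(\<Sum>j\<in>{1..m}. Lip (S j) powr p) < 1"
    using sum_powr_less_1_if_sim_dim_less[OF I(1) r dim] by auto
  obtain a \<eta> c where a: "\<And>j. j \<in> {1..m} \<Longrightarrow> Lip (S j) \<le> a j \<and> \<eta> \<le> a j \<and> a j \<le> c"
    and "0 < \<eta>" "c < 1" "a k + a m < 1 - c" "(\<Sum>j\<in>{1..m}. a j powr p) \<le> 1"
    using enlarge_ratios[where r="\<lambda>j. Lip (S j)", OF I r small p(1,3)] by blast
  have "(a j)-lipschitz_on UNIV (S j)" if "j \<in> {1..m}" for j
    using lip[OF that] by (rule lipschitz_on_le) (use a[OF that] in blast)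
  then interpret transversal_translations S "{1..m}" k m a c \<eta>
    using k a \<open>0 < \<eta>\<close> \<open>c < 1\<close> \<open>a k + a m < 1 - c\<close> by unfold_locales auto
  have "negligible overlaps"
    using p \<open>(\<Sum>j\<in>{1..m}. a j powr p) \<le> 1\<close> by (intro negligible_overlaps) auto
  then show ?thesis
    unfolding overlaps_def translated_system_def Let_def by (intro AE_lborel_if_negligible) simp
qed

end
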